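(* Assume the setting described in the context, let $\delta=\sum_{k=1}^{L-1}\ell_k(\ell_{k-1}+1)$, let $\theta=(\theta_j)_{j\in\mathbb N\cap[0,\delta]}$ be a function from $\mathbb N\cap[0,\delta]$ to $\mathbb R$, and let $\mathbb L\colon\mathbb R^{\ell_L(\ell_{L-1}+1)}\to\mathbb R$ satisfy for all $v=(v_1,\dots,v_{\ell_L(\ell_{L-1}+1)})$ that $\mathbb L(v)=\mathcal L_\infty(\theta_1,\theta_2,\dots,\theta_\delta,v_1,v_2,\dots,v_{\ell_L(\ell_{L-1}+1)})$. Then for all $v,w\in\mathbb R^{\ell_L(\ell_{L-1}+1)}$, $\lambda\in[0,1]$ it holds that $\mathbb L(\lambda v+(1-\lambda)w)\le\lambda\mathbb L(v)+(1-\lambda)\mathbb L(w)$.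
   Context: Setting. Let $L,\mathfrak d\in\mathbb N=\{1,2,\dots\}$, $(\ell_k)_{k\in\mathbb N_0}\subseteq\mathbb N$, $a\in\mathbb R$, $b\in(a,\infty)$ with $\mathfrak d=\sum_{k=1}^L\ell_k(\ell_{k-1}+1)$; let $\mathbf d_k=\sum_{h=1}^k\ell_h(\ell_{h-1}+1)$ for $k\in\mathbb N_0$. For $\theta=(\theta_1,\dots,\theta_{\mathfrak d})\in\mathbb R^{\mathfrak d}$, $k\in\{1,\dots,L\}$, $i\in\{1,\dots,\ell_k\}$, $j\in\{1,\dots,\ell_{k-1}\}$ let $\mathfrak w^{k,\theta}_{i,j}=\theta_{(i-1)\ell_{k-1}+j+\mathbf d_{k-1}}$ and $\mathfrak b^{k,\theta}_i=\theta_{\ell_k\ell_{k-1}+i+\mathbf d_{k-1}}$, let $\mathfrak w^{k,\theta}=(\mathfrak w^{k,\theta}_{i,j})_{i,j}\in\mathbb R^{\ell_k\times\ell_{k-1}}$, $\mathfrak b^{k,\theta}=(\mathfrak b^{k,\theta}_1,\dots,\mathfrak b^{k,\theta}_{\ell_k})\in\mathbb R^{\ell_k}$, and $\mathcal A^\theta_k(x)=\mathfrak b^{k,\theta}+\mathfrak w^{k,\theta}x$. Let $\mathfrak M_\infty(x_1,\dots,x_n)=(\max\{x_1,0\},\dots,\max\{x_n,0\})$ and $\|\cdot\|$ the Euclidean norm. Define $\mathcal N^{k,\theta}_\infty\colon\mathbb R^{\ell_0}\to\mathbb R^{\ell_k}$, $k\in\{1,\dots,L\}$, by $\mathcal N^{1,\theta}_\infty=\mathcal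 A^\theta_1$ and $\mathcal N^{k+1,\theta}_\infty(x)=\mathcal A^\theta_{k+1}(\mathfrak M_\infty(\mathcal N^{k,\theta}_\infty(x)))$. Let $\mu$ be a measure on the Borel $\sigma$-algebra of $[a,b]^{\ell_0}$ with $\mu([a,b]^{\ell_0})\in\mathbb R$, let $f\colon[a,b]^{\ell_0}\to\mathbb R^{\ell_L}$ be measurable, and let $\mathcal L_\infty\colon\mathbb R^{\mathfrak d}\to\mathbb R$, $\mathcal L_\infty(\theta)=\int_{[a,b]^{\ell_0}}\|\mathcal N^{L,\theta}_\infty(x)-f(x)\|^2\,\mu(dx)$ (these integrals are real numbers as part of the setting). *)

theory Defs
  imports "HOL-Analysis.Analysis"
begin

text \<open>Layer widths are a function ell :: nat => nat; parameter vectors theta in R^d are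
 represented as functions nat => real using the entries at indices 1..d; vectors in R^n
 likewise use indices 1..n.\<close>

definition dsum :: "(nat \<Rightarrow> nat) \<Rightarrow> nat \<Rightarrow> nat" where
  "dsum ell k = (\<Sum>h=1..k. ell h * (ell (h - 1) + 1))"

definition wgt :: "(nat \<Rightarrow> nat) \<Rightarrow> (nat \<Rightarrow> real) \<Rightarrow> nat \<Rightarrow> nat \<Rightarrow> nat \<Rightarrow> real" where
  "wgt ell \<theta> k i j = \<theta> ((i - 1) * ell (k - 1) + j + dsum ell (k - 1))"

definition bias :: "(nat \<Rightarrow> nat) \<Rightarrow> (nat \<Rightarrow> real) \<Rightarrow> nat \<Rightarrow> nat \<Rightarrow> real" where
  "bias ell \<theta> k i = \<theta> (ell k * ell (k - 1) + i + dsum ell (k - 1))"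

definition affine :: "(nat \<Rightarrow> nat) \<Rightarrow> (nat \<Rightarrow> real) \<Rightarrow> nat \<Rightarrow> (nat \<Rightarrow> real) \<Rightarrow> nat \<Rightarrow> real" where
  "affine ell \<theta> k x = (\<lambda>i. bias ell \<theta> k i + (\<Sum>j=1..ell (k - 1). wgt ell \<theta> k i j * x j))"

definition relu :: "(nat \<Rightarrow> real) \<Rightarrow> nat \<Rightarrow> real" where
  "relu x = (\<lambda>i. max (x i) 0)"

fun realization :: "(nat \<Rightarrow> nat) \<Rightarrow> (nat \<Rightarrow> real) \<Rightarrow> nat \<Rightarrow> (nat \<Rightarrow> real) \<Rightarrow> nat \<Rightarrow> real" where
  "realization ell \<theta> 0 x = x"
| "realization ell \<theta> (Suc 0) x = affine ell \<theta> 1 x"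
| "realization ell \<theta> (Suc (Suc k)) x = affine ell \<theta> (Suc (Suc k)) (relu (realization ell \<theta> (Suc k) x))"

definition sqerr :: "(nat \<Rightarrow> nat) \<Rightarrow> nat \<Rightarrow> ((nat \<Rightarrow> real) \<Rightarrow> nat \<Rightarrow> real) \<Rightarrow> (nat \<Rightarrow> real) \<Rightarrow> (nat \<Rightarrow> real) \<Rightarrow> real" where
  "sqerr ell L f \<theta> x = (\<Sum>i=1..ell L. (realization ell \<theta> L x i - f x i)\<^sup>2)"

definition loss :: "(nat \<Rightarrow> nat) \<Rightarrow> nat \<Rightarrow> (nat \<Rightarrow> real) measure \<Rightarrow> ((nat \<Rightarrow> real) \<Rightarrow> nat \<Rightarrow> real) \<Rightarrow> (nat \<Rightarrow> real) \<Rightarrow> real" where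
  "loss ell L \<mu> f \<theta> = (\<integral>x. sqerr ell L f \<theta> x \<partial>\<mu>)"

definition cube :: "nat \<Rightarrow> real \<Rightarrow> real \<Rightarrow> (nat \<Rightarrow> real) set" where
  "cube n a b = PiE {1..n} (\<lambda>_. {a..b})"

definition cube_borel :: "nat \<Rightarrow> real \<Rightarrow> real \<Rightarrow> (nat \<Rightarrow> real) measure" where
  "cube_borel n a b = restrict_space (PiM {1..n} (\<lambda>_. borel)) (cube n a b)"

end

theory Submission
  imports Defs
begin

text \<open>Only the last layer of the network depends on the free parameters u, and it does so
  affinely: bias and weights of layer L are entries of the parameter vector, while its input,
  the output of the first L - 1 layers, is built from the fixed prefix \<theta> alone. Hence the
  network output is affine in u, the pointwise squared error is a convex function of an affine
  map, and integrating against \<mu> preserves convexity.\<close>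

lemma dsum_Suc: "dsum ell (Suc k) = dsum ell k + ell (Suc k) * (ell k + 1)"
  by (simp add: dsum_def)

lemma dsum_mono: "k \<le> m \<Longrightarrow> dsum ell k \<le> dsum ell m"
  unfolding dsum_def by (rule sum_mono2) auto

definition layer_input ::
  "(nat \<Rightarrow> nat) \<Rightarrow> (nat \<Rightarrow> real) \<Rightarrow> nat \<Rightarrow> (nat \<Rightarrow> real) \<Rightarrow> nat \<Rightarrow> real" where
  "layer_input ell \<theta> k x = (if k = 0 then x else relu (realization ell \<theta> k x))"

lemma realization_Suc:
  "realization ell \<theta> (Suc k) x = affine ell \<theta> (Suc k) (layer_input ell \<theta> k x)"
  by (cases k) (simp_all add: layer_input_def)

lemma affine_cong_input:
  assumes "\<And>j. j \<in> {1..ell (k - 1)} \<Longrightarrow> y j = z j"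
  shows "affine ell \<theta> k y = affine ell \<theta> k z"
  unfolding affine_def using assms by (auto intro!: sum.cong)

lemma affine_cong_params:
  assumes "\<And>n. n \<le> dsum ell k \<Longrightarrow> \<theta>1 n = \<theta>2 n" and "k \<ge> 1" and i: "i \<in> {1..ell k}"
  shows "affine ell \<theta>1 k y i = affine ell \<theta>2 k y i"
proof -
  obtain m where k: "k = Suc m" using \<open>k \<ge> 1\<close> by (cases k) auto
  have bias: "bias ell \<theta>1 k i = bias ell \<theta>2 k i"
    unfolding bias_def using i k dsum_Suc[of ell m]
    by (intro assms(1)) (auto simp: algebra_simps)
  have wgt: "wgt ell \<theta>1 k i j = wgt ell \<theta>2 k i j" if "j \<in> {1..ell m}" for j
  proof -
    have "(i - 1) * ell m + j \<le> i * ell m"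
      using that i by (cases i) auto
    also have "\<dots> \<le> ell k * ell m" using i by simp
    finally show ?thesis unfolding wgt_def using k dsum_Suc[of ell m]
      by (intro assms(1)) (auto simp: algebra_simps)
  qed
  show ?thesis unfolding affine_def using bias wgt k by simp
qed

lemma layer_input_cong_params:
  assumes "\<And>n. n \<le> dsum ell k \<Longrightarrow> \<theta>1 n = \<theta>2 n" and "j \<in> {1..ell k}"
  shows "layer_input ell \<theta>1 k x j = layer_input ell \<theta>2 k x j"
  using assms
proof (induction k arbitrary: j)
  case 0
  then show ?case by (simp add: layer_input_def)
next
  case (Suc k)
  have prefix: "\<theta>1 n = \<theta>2 n" if "n \<le> dsum ell k" for n
    using Suc.prems(1) dsum_mono[of k "Suc k" ell] that by simp
  have "affine ell \<theta>1 (Suc k) (layer_input ell \<theta>1 k x) j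
      = affine ell \<theta>1 (Suc k) (layer_input ell \<theta>2 k x) j"
    using Suc.IH[OF prefix] by (intro fun_cong[OF affine_cong_input]) simp
  also have "\<dots> = affine ell \<theta>2 (Suc k) (layer_input ell \<theta>2 k x) j"
    using Suc.prems by (intro affine_cong_params) auto
  finally show ?case by (simp add: layer_input_def relu_def realization_Suc)
qed

lemma affine_params_convex_comb:
  "affine ell (\<lambda>n. t * \<theta>1 n + (1 - t) * \<theta>2 n) k y i
     = t * affine ell \<theta>1 k y i + (1 - t) * affine ell \<theta>2 k y i"
  unfolding affine_def bias_def wgt_def
  by (simp add: sum.distrib sum_distrib_left distrib_left distrib_right mult.assoc)

lemma realization_params_convex_comb:
  assumes "k \<ge> 1" and "\<And>n. n \<le> dsum ell (k - 1) \<Longrightarrow> \<theta>1 n = \<theta>2 n"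
  shows "realization ell (\<lambda>n. t * \<theta>1 n + (1 - t) * \<theta>2 n) k x i
     = t * realization ell \<theta>1 k x i + (1 - t) * realization ell \<theta>2 k x i"
proof -
  obtain m where k: "k = Suc m" using \<open>k \<ge> 1\<close> by (cases k) auto
  define \<theta> where "\<theta> = (\<lambda>n. t * \<theta>1 n + (1 - t) * \<theta>2 n)"
  have \<theta>_prefix: "\<theta> n = \<theta>1 n" and \<theta>2_prefix: "\<theta>2 n = \<theta>1 n" if "n \<le> dsum ell m" for n
    using assms(2) k that by (simp_all add: \<theta>_def algebra_simps)
  have same_input:
    "affine ell \<eta>' k (layer_input ell \<eta> m x) = affine ell \<eta>' k (layer_input ell \<theta>1 m x)"
    if "\<And>n. n \<le> dsum ell m \<Longrightarrow> \<eta> n = \<theta>1 n" for \<eta> \<eta>'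
    using k layer_input_cong_params[OF that] by (intro affine_cong_input) simp
  have "realization ell \<theta> k x i = affine ell \<theta> k (layer_input ell \<theta>1 m x) i"
    using same_input[OF \<theta>_prefix] by (simp add: k realization_Suc)
  also have "\<dots> = t * affine ell \<theta>1 k (layer_input ell \<theta>1 m x) i
      + (1 - t) * affine ell \<theta>2 k (layer_input ell \<theta>1 m x) i"
    unfolding \<theta>_def by (rule affine_params_convex_comb)
  also have "\<dots> = t * realization ell \<theta>1 k x i + (1 - t) * realization ell \<theta>2 k x i"
    using same_input[OF \<theta>2_prefix] by (simp add: k realization_Suc)
  finally show ?thesis unfolding \<theta>_def .
qed

lemma power2_diff_convex_comb_le:
  fixes t p q c :: real
  assumes "0 \<le> t" "t \<le> 1"
  shows "(t * p + (1 - t) * q - c)\<^sup>2 \<le> t * (p - c)\<^sup>2 + (1 - t) * (q - c)\<^sup>2"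
  using convex_onD[OF convex_power2, of "1 - t" "p - c" "q - c"] assms
  by (simp add: algebra_simps)

lemma sqerr_params_convex_comb_le:
  assumes "L \<ge> 1" and "\<And>n. n \<le> dsum ell (L - 1) \<Longrightarrow> \<theta>1 n = \<theta>2 n" and "t \<in> {0..1}"
  shows "sqerr ell L f (\<lambda>n. t * \<theta>1 n + (1 - t) * \<theta>2 n) x
     \<le> t * sqerr ell L f \<theta>1 x + (1 - t) * sqerr ell L f \<theta>2 x"
proof -
  have "sqerr ell L f (\<lambda>n. t * \<theta>1 n + (1 - t) * \<theta>2 n) x
      = (\<Sum>i=1..ell L.
          (t * realization ell \<theta>1 L x i + (1 - t) * realization ell \<theta>2 L x i - f x i)\<^sup>2)"
    unfolding sqerr_def
    by (simp only: realization_params_convex_comb[of L ell \<theta>1 \<theta>2, OF assms(1,2)])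
  also have "\<dots> \<le> (\<Sum>i=1..ell L. t * (realization ell \<theta>1 L x i - f x i)\<^sup>2
      + (1 - t) * (realization ell \<theta>2 L x i - f x i)\<^sup>2)"
    using assms(3) by (intro sum_mono power2_diff_convex_comb_le) auto
  also have "\<dots> = t * sqerr ell L f \<theta>1 x + (1 - t) * sqerr ell L f \<theta>2 x"
    unfolding sqerr_def by (simp add: sum.distrib sum_distrib_left)
  finally show ?thesis .
qed

lemma loss_params_convex_comb_le:
  assumes "L \<ge> 1" and "\<And>n. n \<le> dsum ell (L - 1) \<Longrightarrow> \<theta>1 n = \<theta>2 n" and "t \<in> {0..1}"
    and "\<And>\<eta>. integrable \<mu> (sqerr ell L f \<eta>)"
  shows "loss ell L \<mu> f (\<lambda>n. t * \<theta>1 n + (1 - t) * \<theta>2 n)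
     \<le> t * loss ell L \<mu> f \<theta>1 + (1 - t) * loss ell L \<mu> f \<theta>2"
proof -
  have "loss ell L \<mu> f (\<lambda>n. t * \<theta>1 n + (1 - t) * \<theta>2 n)
      \<le> (\<integral>x. t * sqerr ell L f \<theta>1 x + (1 - t) * sqerr ell L f \<theta>2 x \<partial>\<mu>)"
    unfolding loss_def using assms
    by (intro integral_mono sqerr_params_convex_comb_le) auto
  also have "\<dots> = t * loss ell L \<mu> f \<theta>1 + (1 - t) * loss ell L \<mu> f \<theta>2"
    unfolding loss_def using assms(4) by simp
  finally show ?thesis .
qed

theorem proposition2p15:
  fixes L :: nat and ell :: "nat \<Rightarrow> nat" and a b :: real
    and \<mu> :: "(nat \<Rightarrow> real) measure" and f :: "(nat \<Rightarrow> real) \<Rightarrow> nat \<Rightarrow> real"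
    and \<theta> :: "nat \<Rightarrow> real" and LL :: "(nat \<Rightarrow> real) \<Rightarrow> real"
    and v w :: "nat \<Rightarrow> real" and t :: real
  assumes L: "L \<ge> 1"
    and ell_pos: "\<And>k. ell k \<ge> 1"
    and ab: "a < b"
    and sets_mu: "sets \<mu> = sets (cube_borel (ell 0) a b)"
    and finite_mu: "emeasure \<mu> (space \<mu>) < \<infinity>"
    and f_meas: "\<And>i. i \<in> {1..ell L} \<Longrightarrow> (\<lambda>x. f x i) \<in> borel_measurable \<mu>"
    and integrable_loss: "\<And>\<eta>. integrable \<mu> (sqerr ell L f \<eta>)"
    and LL_def: "\<And>u. LL u = loss ell L \<mu> f
                   (\<lambda>j. if j \<le> dsum ell (L - 1) then \<theta> j else u (j - dsum ell (L - 1)))"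
    and lam: "t \<in> {0..1}"
  shows "LL (\<lambda>j. t * v j + (1 - t) * w j) \<le> t * LL v + (1 - t) * LL w"
proof -
  define D where "D = dsum ell (L - 1)"
  define P where "P u = (\<lambda>j. if j \<le> D then \<theta> j else u (j - D))" for u :: "nat \<Rightarrow> real"
  have "P (\<lambda>j. t * v j + (1 - t) * w j) = (\<lambda>n. t * P v n + (1 - t) * P w n)"
    by (auto simp: P_def algebra_simps)
  moreover have "\<And>n. n \<le> D \<Longrightarrow> P v n = P w n"
    by (simp add: P_def)
  ultimately show ?thesis
    using loss_params_convex_comb_le[OF L _ lam integrable_loss, of "P v" "P w"] LL_def
    unfolding P_def D_def by simp
qed

end
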